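(* Let $(X,\mathbf R)$ be a symmetric association scheme with $D$ classes which is cometric with respect to the ordering $E_0,\dots,E_D$. Fix $x\in X$ and write $E_k^*=E_k^*(x)$. Let $\chi\in V$ be a code and set $\delta^*=\delta^*(\chi)$, $s_x=s_x(\chi)$. Then for every $0\le k\le D$, $E_k^*\chi$ is a relative $(\delta^*-s_x)$-design with respect to $x$; that is, $E_jE_k^*\chi\in\mathbb C E_j\hat x$ for all $1\le j\le \delta^*-s_x$.
   Context: $(X,\mathbf R)$ is a symmetric association scheme with associate matrices $A_0=I,\dots,A_D$, Bose–Mesner algebra $M$, and primitive idempotents $E_0=|X|^{-1}J,E_1,\dots,E_D$. Cometric (Q-polynomial) with respect to $E_0,\dots,E_D$ means that for each $j$, $E_j$ is a polynomial of degree exactly $j$ in $E_1$ with respect to entrywise (Hadamard) multiplication. $V=\mathbb C^X$ with standard basis $\{\hat y\}$ and standard Hermitian inner product. $E_k^*(x)$ is the diagonal matrix with $(E_k^*(x))_{yy}=(A_k)_{xy}$. A code is a vector $\chi\notin E_0V$ with $\chi\notin E_0^*(z)V$ for all $z\in X$. $\delta^*(\chi)=\min\{j\ne0:E_j\chi\ne0\}$, $s_x(\chi)=|\{i\ne0:E_i^*(x)\chi\ne0\}|$. A vector $\psi$ is a relative $t$-design with respect to $x$ if $E_j\psi$ and $E_j\hat x$ are linearly dependent for all $1\le j\le t$ (vacuous if $t\le 0$). *)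

theory Defs
  imports "HOL-Analysis.Analysis" "HOL-Computational_Algebra.Polynomial"
begin

definition mscale :: "complex \<Rightarrow> complex^'x^'y \<Rightarrow> complex^'x^'y" where
  "mscale c M = (\<chi> i j. c * M $ i $ j)"

definition Jmat :: "complex^'x^'x" where
  "Jmat = (\<chi> i j. 1)"

definition sym_assoc_scheme :: "nat \<Rightarrow> (nat \<Rightarrow> complex^'x^'x) \<Rightarrow> bool" where
  "sym_assoc_scheme D A \<longleftrightarrow>
     (\<forall>i\<le>D. \<forall>y z. A i $ y $ z = 0 \<or> A i $ y $ z = 1) \<and>
     A 0 = mat 1 \<and>
     (\<Sum>i\<le>D. A i) = Jmat \<and>
     (\<forall>i\<le>D. A i \<noteq> 0) \<and>
     (\<forall>i\<le>D. transpose (A i) = A i) \<and>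
     (\<forall>i\<le>D. \<forall>j\<le>D. \<exists>p. A i ** A j = (\<Sum>h\<le>D. mscale (p h) (A h)))"

definition bose_mesner :: "nat \<Rightarrow> (nat \<Rightarrow> complex^'x^'x) \<Rightarrow> (complex^'x^'x) set" where
  "bose_mesner D A = {M. \<exists>c. M = (\<Sum>h\<le>D. mscale (c h) (A h))}"

text \<open>E 0 = |X|^{-1} J, E 1, ..., E D are the primitive idempotents of M
  (D+1 nonzero pairwise orthogonal idempotents of the (D+1)-dimensional
  algebra M summing to I).\<close>
definition primitive_idempotents ::
  "nat \<Rightarrow> (nat \<Rightarrow> complex^'x^'x) \<Rightarrow> (nat \<Rightarrow> complex^'x^'x) \<Rightarrow> bool" where
  "primitive_idempotents D A E \<longleftrightarrow>
     E 0 = mscale (1 / of_nat CARD('x)) Jmat \<and>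
     (\<forall>i\<le>D. E i \<in> bose_mesner D A \<and> E i \<noteq> 0) \<and>
     (\<forall>i\<le>D. \<forall>j\<le>D. E i ** E j = (if i = j then E i else 0)) \<and>
     (\<Sum>i\<le>D. E i) = mat 1"

definition cometric :: "nat \<Rightarrow> (nat \<Rightarrow> complex^'x^'x) \<Rightarrow> bool" where
  "cometric D E \<longleftrightarrow>
     (\<forall>j\<le>D. \<exists>p :: complex poly. degree p = j \<and>
        (\<forall>y z. E j $ y $ z = poly p (E 1 $ y $ z)))"

definition dual_idem :: "(nat \<Rightarrow> complex^'x^'x) \<Rightarrow> nat \<Rightarrow> 'x \<Rightarrow> complex^'x^'x" where
  "dual_idem A k x = (\<chi> y z. if y = z then A k $ x $ y else 0)"

definition is_code ::
  "(nat \<Rightarrow> complex^'x^'x) \<Rightarrow> (nat \<Rightarrow> complex^'x^'x) \<Rightarrow> complex^'x \<Rightarrow> bool" where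
  "is_code A E v \<longleftrightarrow>
     v \<notin> range (\<lambda>w. E 0 *v w) \<and> (\<forall>z. v \<notin> range (\<lambda>w. dual_idem A 0 z *v w))"

definition dual_min_dist :: "nat \<Rightarrow> (nat \<Rightarrow> complex^'x^'x) \<Rightarrow> complex^'x \<Rightarrow> nat" where
  "dual_min_dist D E v = Min {j \<in> {1..D}. E j *v v \<noteq> 0}"

definition s_x :: "nat \<Rightarrow> (nat \<Rightarrow> complex^'x^'x) \<Rightarrow> 'x \<Rightarrow> complex^'x \<Rightarrow> nat" where
  "s_x D A x v = card {i \<in> {1..D}. dual_idem A i x *v v \<noteq> 0}"

definition lin_dep2 :: "complex^'x \<Rightarrow> complex^'x \<Rightarrow> bool" where
  "lin_dep2 u w \<longleftrightarrow> (\<exists>a b. (a \<noteq> 0 \<or> b \<noteq> 0) \<and> a *s u + b *s w = 0)"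

text \<open>Relative t-design with respect to x (t an integer; vacuous if t \<le> 0).\<close>
definition relative_design ::
  "nat \<Rightarrow> (nat \<Rightarrow> complex^'x^'x) \<Rightarrow> 'x \<Rightarrow> complex^'x \<Rightarrow> int \<Rightarrow> bool" where
  "relative_design D E x psi t \<longleftrightarrow>
     (\<forall>j. 1 \<le> j \<and> j \<le> D \<and> int j \<le> t \<longrightarrow> lin_dep2 (E j *v psi) (E j *v axis x 1))"

end

theory Submission
  imports Defs
begin

text \<open>
  Let \<open>S\<close> be the set of classes \<open>i > 0\<close> with \<open>E\<^sup>*\<^sub>i \<chi> \<noteq> 0\<close> and \<open>s = |S|\<close>. The dual
  eigenvalues \<open>\<theta>\<^sup>*\<^sub>i\<close> (the value of \<open>E\<^sub>1\<close> on class \<open>i\<close>) are distinct, so some polynomial \<open>g\<close>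
  of degree \<open>< s\<close> is \<open>1\<close> at \<open>\<theta>\<^sup>*\<^sub>k\<close> and \<open>0\<close> at the other \<open>\<theta>\<^sup>*\<^sub>i\<close>, \<open>i \<in> S\<close>. Away from the
  coordinate \<open>x\<close>, \<open>E\<^sup>*\<^sub>k \<chi>\<close> then agrees with \<open>G \<chi>\<close>, where \<open>G\<close> is the diagonal matrix carrying
  row \<open>x\<close> of the entrywise polynomial \<open>g(E\<^sub>1)\<close>; since \<open>g(E\<^sub>1)\<close> lies in the span of
  \<open>E\<^sub>0, \<dots>, E\<^bsub>s-1\<^esub>\<close>, \<open>G\<close> is a combination of dual idempotents \<open>A\<^sup>*\<^sub>h(x)\<close> with \<open>h < s\<close>.
  In \<open>E\<^sub>j G \<chi> = \<Sum>\<^sub>l E\<^sub>j G E\<^sub>l \<chi>\<close> the term \<open>l = 0\<close> is a multiple of \<open>E\<^sub>j (axis x 1)\<close>, the terms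
  \<open>0 < l < \<delta>\<^sup>*\<close> vanish, and so do those with \<open>l \<ge> \<delta>\<^sup>* \<ge> j + s\<close>: \<open>E\<^sub>j A\<^sup>*\<^sub>h(x) E\<^sub>l = 0\<close>
  whenever \<open>h + j < l\<close>, because the entrywise product \<open>E\<^sub>h \<circ> E\<^sub>j\<close> is a polynomial of degree \<open>h + j\<close> in \<open>E\<^sub>1\<close>, hence
  annihilated by \<open>E\<^sub>l\<close>, and the squared entries of \<open>E\<^sub>j A\<^sup>*\<^sub>h(x) E\<^sub>l\<close>, summed over \<open>x\<close>, add
  up to the trace of \<open>(E\<^sub>h \<circ> E\<^sub>j) E\<^sub>l\<close>.
\<close>

section \<open>Matrices and polynomials\<close>

lemma mscale_apply [simp]: "mscale c M $ i $ j = c * M $ i $ j"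
  by (simp add: mscale_def)

lemma mscale_0 [simp]: "mscale c 0 = 0"
  by (simp add: vec_eq_iff)

lemma mscale_0_left [simp]: "mscale 0 M = 0"
  by (simp add: vec_eq_iff)

lemma mscale_matrix_mult: "mscale c X ** Y = mscale c (X ** Y)"
  by (simp add: vec_eq_iff matrix_matrix_mult_def sum_distrib_left mult.assoc)

lemma matrix_mult_mscale: "X ** mscale c Y = mscale c (X ** Y)"
  by (simp add: vec_eq_iff matrix_matrix_mult_def sum_distrib_left mult.left_commute)

lemma mscale_matrix_vector_mult: "mscale c X *v u = c *s (X *v u)"
  by (simp add: vec_eq_iff matrix_vector_mult_def sum_distrib_left mult.assoc)

lemma matrix_vector_mult_scalar: "X *v (c *s u) = c *s (X *v (u :: 'a::comm_semiring_1^'n))"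
  by (simp add: vec_eq_iff matrix_vector_mult_def sum_distrib_left mult.left_commute)

lemma sum_matrix_mult: "(\<Sum>i\<in>I. f i) ** (Y :: 'a::semiring_1^'n^'m) = (\<Sum>i\<in>I. f i ** Y)"
  by (induction I rule: infinite_finite_induct)
    (simp_all add: vec_eq_iff matrix_matrix_mult_def distrib_right sum.distrib)

lemma matrix_mult_sum: "(X :: 'a::semiring_1^'n^'m) ** (\<Sum>i\<in>I. f i) = (\<Sum>i\<in>I. X ** f i)"
  by (induction I rule: infinite_finite_induct) (simp_all add: matrix_add_ldistrib)

lemma sum_matrix_vector_mult: "(\<Sum>i\<in>I. f i) *v (u :: 'a::semiring_1^'n) = (\<Sum>i\<in>I. f i *v u)"
  by (induction I rule: infinite_finite_induct) (simp_all add: matrix_vector_mult_add_rdistrib)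

lemma matrix_vector_mult_sum: "(M :: 'a::semiring_1^'n^'m) *v (\<Sum>i\<in>I. f i) = (\<Sum>i\<in>I. M *v f i)"
  by (induction I rule: infinite_finite_induct) (simp_all add: matrix_vector_right_distrib)

lemma matrix_diff_ldistrib: "(X :: 'a::ring_1^'n^'m) ** (Y - Z) = X ** Y - X ** Z"
  by (simp add: vec_eq_iff matrix_matrix_mult_def right_diff_distrib sum_subtractf)

lemma matrix_diff_rdistrib: "((X :: 'a::ring_1^'n^'m) - Y) ** Z = X ** Z - Y ** Z"
  by (simp add: vec_eq_iff matrix_matrix_mult_def left_diff_distrib sum_subtractf)

lemma transpose_diff: "transpose (X - Y) = transpose X - transpose (Y :: 'a::ab_group_add^'n^'m)"
  by (simp add: vec_eq_iff transpose_def)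

lemma transpose_eq_selfD: "transpose K = K \<Longrightarrow> K $ a $ b = K $ b $ a"
  by (drule arg_cong[where f = "\<lambda>M. M $ a $ b"]) (simp add: transpose_def)

lemma map_matrix_cnj_mult: "map_matrix cnj (X ** Y) = map_matrix cnj X ** map_matrix cnj Y"
  by (simp add: vec_eq_iff matrix_matrix_mult_def)

lemma conj_transpose_mult_self_eq_0:
  fixes B :: "complex^'n^'m"
  assumes "transpose (map_matrix cnj B) ** B = 0"
  shows "B = 0"
proof -
  have "B $ w $ a = 0" for w a
  proof -
    have "(\<Sum>u\<in>UNIV. B $ u $ a * cnj (B $ u $ a)) = 0"
      using arg_cong[OF assms, of "\<lambda>M. M $ a $ a"]
      by (simp add: matrix_matrix_mult_def transpose_def mult.commute)
    then have "complex_of_real (\<Sum>u\<in>UNIV. (cmod (B $ u $ a))\<^sup>2) = 0"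
      by (simp only: of_real_sum complex_norm_square)
    then have "(\<Sum>u\<in>UNIV. (cmod (B $ u $ a))\<^sup>2) = 0"
      by (simp only: of_real_eq_0_iff)
    then show ?thesis
      by (simp add: sum_nonneg_eq_0_iff)
  qed
  then show ?thesis
    by (simp add: vec_eq_iff)
qed

lemma map_matrix_cnj_eq_self:
  fixes P :: "complex^'n^'n"
  assumes sym: "transpose P = P" and idem: "P ** P = P"
    and comm: "P ** map_matrix cnj P = map_matrix cnj P ** P"
  shows "map_matrix cnj P = P"
proof -
  define F where "F = map_matrix cnj P"
  have cnj_F: "map_matrix cnj F = P"
    by (simp add: F_def vec_eq_iff)
  have sym_F: "transpose F = F"
    using sym by (simp add: F_def vec_eq_iff transpose_def)
  have idem_F: "F ** F = F"
    using arg_cong[OF idem, of "map_matrix cnj"] by (simp add: F_def map_matrix_cnj_mult)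
  have comm': "P ** F = F ** P"
    using comm by (simp add: F_def)
  \<comment> \<open>\<open>B\<^sup>H B = 0\<close> forces \<open>P = F P\<close>, and conjugating gives \<open>F = P F = P\<close>.\<close>
  define B where "B = P - F ** P"
  have "map_matrix cnj B = F - P ** F"
    by (simp add: B_def vec_eq_iff F_def matrix_matrix_mult_def)
  then have B_adj: "transpose (map_matrix cnj B) = F - F ** P"
    by (simp add: transpose_diff matrix_transpose_mul sym sym_F)
  have "(F - F ** P) ** B = F ** P - F ** (F ** P) - (F ** P) ** P + (F ** P) ** (F ** P)"
    by (simp add: B_def matrix_diff_ldistrib matrix_diff_rdistrib)
  also have "\<dots> = 0"
  proof -
    have "F ** (F ** P) = F ** P" "(F ** P) ** P = F ** P"
      by (metis idem idem_F matrix_mul_assoc)+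
    moreover have "(F ** P) ** (F ** P) = F ** P"
      by (metis comm' idem idem_F matrix_mul_assoc)
    ultimately show ?thesis
      by simp
  qed
  finally have "B = 0"
    using B_adj conj_transpose_mult_self_eq_0 by metis
  then have P_eq: "P = F ** P"
    by (simp add: B_def)
  have "F = map_matrix cnj (F ** P)"
    using P_eq by (simp add: F_def[symmetric])
  also have "\<dots> = P ** F"
    by (simp add: map_matrix_cnj_mult cnj_F F_def[symmetric])
  also have "\<dots> = P"
    using P_eq comm' by simp
  finally show ?thesis
    by (simp add: F_def)
qed

text \<open>\<open>diag_row (E h) x\<close> is the dual idempotent \<open>A\<^sup>*\<^sub>h(x)\<close> up to the factor \<open>|X|\<close>.\<close>

definition diag_row :: "'a::zero^'n^'m \<Rightarrow> 'm \<Rightarrow> 'a^'n^'n" where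
  "diag_row F x = (\<chi> a b. if a = b then F $ x $ a else 0)"

lemma dual_idem_eq_diag_row: "dual_idem A k x = diag_row (A k) x"
  by (simp add: dual_idem_def diag_row_def)

lemma diag_row_matrix_vector_mult: "diag_row F x *v u = (\<chi> w. F $ x $ w * u $ w)"
  by (simp add: vec_eq_iff diag_row_def matrix_vector_mult_def if_distrib if_distribR cong: if_cong)

lemma matrix_mult_diag_row_mult:
  "(K ** diag_row F x ** L) $ y $ z = (\<Sum>w\<in>UNIV. K $ y $ w * F $ x $ w * L $ w $ z)"
  by (simp add: diag_row_def matrix_matrix_mult_def if_distrib if_distribR cong: if_cong)

lemma diag_row_sum: "diag_row (\<Sum>i\<in>I. f i) x = (\<Sum>i\<in>I. diag_row (f i) x)"
  by (induction I rule: infinite_finite_induct) (simp_all add: vec_eq_iff diag_row_def)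

lemma diag_row_mscale: "diag_row (mscale c M) x = mscale c (diag_row M x)"
  by (simp add: vec_eq_iff diag_row_def)

lemma dual_idem_eq_diag_row_minus:
  assumes "A k $ x $ x = 0" and "\<And>w. w \<noteq> x \<Longrightarrow> v $ w \<noteq> 0 \<Longrightarrow> G $ x $ w = A k $ x $ w"
  shows "dual_idem A k x *v v = diag_row G x *v v - (G $ x $ x * v $ x) *s axis x 1"
proof -
  have "(dual_idem A k x *v v) $ w = (diag_row G x *v v - (G $ x $ x * v $ x) *s axis x 1) $ w" for w
    using assms by (cases "w = x"; cases "v $ w = 0")
      (simp_all add: dual_idem_eq_diag_row diag_row_matrix_vector_mult axis_def)
  then show ?thesis
    by (simp add: vec_eq_iff)
qed

lemma sum_swap_pairs:
  "(\<Sum>a\<in>A. \<Sum>b\<in>B. \<Sum>c\<in>C. \<Sum>d\<in>D. f a b c d) = (\<Sum>c\<in>C. \<Sum>d\<in>D. \<Sum>a\<in>A. \<Sum>b\<in>B. f a b c d)"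
proof -
  have "(\<Sum>b\<in>B. \<Sum>c\<in>C. \<Sum>d\<in>D. f a b c d) = (\<Sum>c\<in>C. \<Sum>d\<in>D. \<Sum>b\<in>B. f a b c d)" for a
    by (subst sum.swap) (rule sum.cong[OF refl], rule sum.swap)
  then have "(\<Sum>a\<in>A. \<Sum>b\<in>B. \<Sum>c\<in>C. \<Sum>d\<in>D. f a b c d) = (\<Sum>a\<in>A. \<Sum>c\<in>C. \<Sum>d\<in>D. \<Sum>b\<in>B. f a b c d)"
    by simp
  also have "\<dots> = (\<Sum>c\<in>C. \<Sum>d\<in>D. \<Sum>a\<in>A. \<Sum>b\<in>B. f a b c d)"
    by (subst sum.swap) (rule sum.cong[OF refl], rule sum.swap)
  finally show ?thesis .
qed

lemma symmetric_idempotent_gram: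
  assumes "transpose K = K" and "K ** K = (K :: 'a::comm_semiring_1^'n^'n)"
  shows "(\<Sum>y\<in>UNIV. K $ y $ w * K $ y $ w') = K $ w $ w'"
proof -
  have "K $ y $ w = K $ w $ y" for y
    using assms(1) by (rule transpose_eq_selfD)
  then show ?thesis
    using arg_cong[OF assms(2), of "\<lambda>M. M $ w $ w'"] by (simp add: matrix_matrix_mult_def)
qed

lemma quadratic_form_symmetric_idempotent:
  fixes H :: "'a::comm_semiring_1^'n^'n"
  assumes "transpose H = H" and "H ** H = H"
  shows "(\<Sum>x\<in>UNIV. (\<Sum>w\<in>UNIV. H $ x $ w * u w)\<^sup>2)
       = (\<Sum>w\<in>UNIV. \<Sum>w'\<in>UNIV. H $ w $ w' * (u w * u w'))"
proof -
  have "(\<Sum>x\<in>UNIV. (\<Sum>w\<in>UNIV. H $ x $ w * u w)\<^sup>2)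
      = (\<Sum>x\<in>UNIV. \<Sum>w\<in>UNIV. \<Sum>w'\<in>UNIV. H $ x $ w * H $ x $ w' * (u w * u w'))"
    by (simp add: power2_eq_square sum_product mult_ac)
  also have "\<dots> = (\<Sum>w\<in>UNIV. \<Sum>w'\<in>UNIV. \<Sum>x\<in>UNIV. H $ x $ w * H $ x $ w' * (u w * u w'))"
    by (subst sum.swap) (rule sum.cong[OF refl], rule sum.swap)
  also have "\<dots> = (\<Sum>w\<in>UNIV. \<Sum>w'\<in>UNIV. H $ w $ w' * (u w * u w'))"
    by (simp add: sum_distrib_right[symmetric] symmetric_idempotent_gram assms)
  finally show ?thesis .
qed

lemma sum_sq_sandwich_diag_row:
  fixes K H L :: "'a::comm_semiring_1^'n^'n"
  assumes "transpose K = K" "K ** K = K" "transpose H = H" "H ** H = H"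
    and "transpose L = L" "L ** L = L"
  shows "(\<Sum>y\<in>UNIV. \<Sum>z\<in>UNIV. \<Sum>x\<in>UNIV. ((K ** diag_row H x ** L) $ y $ z)\<^sup>2)
       = (\<Sum>w\<in>UNIV. \<Sum>w'\<in>UNIV. H $ w $ w' * K $ w $ w' * L $ w $ w')"
proof -
  define f where "f y z w w' = H $ w $ w' * (K $ y $ w * K $ y $ w') * (L $ w $ z * L $ w' $ z)" for y z w w'
  have "(\<Sum>x\<in>UNIV. ((K ** diag_row H x ** L) $ y $ z)\<^sup>2) = (\<Sum>w\<in>UNIV. \<Sum>w'\<in>UNIV. f y z w w')" for y z
    using quadratic_form_symmetric_idempotent[OF assms(3,4), of "\<lambda>w. K $ y $ w * L $ w $ z"]
    by (simp add: matrix_mult_diag_row_mult f_def mult_ac)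
  then have "(\<Sum>y\<in>UNIV. \<Sum>z\<in>UNIV. \<Sum>x\<in>UNIV. ((K ** diag_row H x ** L) $ y $ z)\<^sup>2)
      = (\<Sum>w\<in>UNIV. \<Sum>w'\<in>UNIV. \<Sum>y\<in>UNIV. \<Sum>z\<in>UNIV. f y z w w')"
    by (simp add: sum_swap_pairs[of f])
  also have "\<dots> = (\<Sum>w\<in>UNIV. \<Sum>w'\<in>UNIV. H $ w $ w' * (\<Sum>y\<in>UNIV. K $ y $ w * K $ y $ w')
      * (\<Sum>z\<in>UNIV. L $ z $ w * L $ z $ w'))"
    using transpose_eq_selfD[OF assms(5)]
    by (simp add: f_def sum_product sum_distrib_left mult_ac)
  also have "\<dots> = (\<Sum>w\<in>UNIV. \<Sum>w'\<in>UNIV. H $ w $ w' * K $ w $ w' * L $ w $ w')"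
    using assms by (simp add: symmetric_idempotent_gram)
  finally show ?thesis .
qed

lemma ex_poly_indicator:
  fixes T :: "'a::field set"
  assumes "finite T" and "t0 \<notin> T"
  obtains g where "degree g \<le> card T" and "poly g t0 = 1" and "\<And>t. t \<in> T \<Longrightarrow> poly g t = 0"
proof
  define Q where "Q = (\<Prod>t\<in>T. [:- t, 1:])"
  have "poly Q t0 \<noteq> 0"
    using assms by (auto simp: Q_def poly_prod)
  show "poly (smult (1 / poly Q t0) Q) t0 = 1"
    using \<open>poly Q t0 \<noteq> 0\<close> by simp
  show "poly (smult (1 / poly Q t0) Q) t = 0" if "t \<in> T" for t
    using assms(1) that by (simp add: Q_def poly_prod)
  have "degree Q \<le> card T"
    unfolding Q_def using degree_prod_sum_le[OF assms(1), of "\<lambda>t. [:- t, 1:]"] by simp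
  then show "degree (smult (1 / poly Q t0) Q) \<le> card T"
    by simp
qed

lemma degree_cancel_leading_le:
  fixes g p :: "'a::field poly"
  assumes "degree g \<le> Suc m" and "degree p = Suc m"
  shows "degree (g - smult (coeff g (Suc m) / lead_coeff p) p) \<le> m"
proof (rule degree_le, intro allI impI)
  fix i assume "m < i"
  then consider "i = Suc m" | "Suc m < i"
    by linarith
  then show "coeff (g - smult (coeff g (Suc m) / lead_coeff p) p) i = 0"
  proof cases
    case 1
    have "p \<noteq> 0"
      using assms(2) by auto
    then have "lead_coeff p \<noteq> 0"
      by simp
    then show ?thesis
      using 1 assms(2) by simp
  next
    case 2
    then show ?thesis
      using assms by (simp add: coeff_eq_0)
  qed
qed

lemma lin_dep2_scaled: "u = c *s w \<Longrightarrow> lin_dep2 u w"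
  unfolding lin_dep2_def by (intro exI[of _ 1] exI[of _ "- c"]) simp

section \<open>Symmetric association schemes and their idempotents\<close>

locale symmetric_scheme =
  fixes D :: nat and A :: "nat \<Rightarrow> complex^'x::finite^'x"
  assumes scheme: "sym_assoc_scheme D A"
begin

lemma A_zero_one: "i \<le> D \<Longrightarrow> A i $ a $ b = 0 \<or> A i $ a $ b = 1"
  using scheme by (simp add: sym_assoc_scheme_def)

lemma A_0: "A 0 = mat 1"
  using scheme by (simp add: sym_assoc_scheme_def)

lemma transpose_A: "i \<le> D \<Longrightarrow> transpose (A i) = A i"
  using scheme by (simp add: sym_assoc_scheme_def)

lemma A_mult_A_in_bose_mesner: "i \<le> D \<Longrightarrow> j \<le> D \<Longrightarrow> A i ** A j \<in> bose_mesner D A"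
  using scheme by (auto simp: sym_assoc_scheme_def bose_mesner_def)

lemma ex1_class: "\<exists>!i. i \<le> D \<and> A i $ a $ b = 1"
proof -
  have "of_nat (card {i \<in> {..D}. A i $ a $ b = 1}) = (\<Sum>i\<le>D. if A i $ a $ b = 1 then 1 else (0::complex))"
    by (simp add: sum.If_cases Int_def)
  also have "\<dots> = (\<Sum>i\<le>D. A i $ a $ b)"
    by (rule sum.cong) (use A_zero_one in auto)
  also have "\<dots> = 1"
    using scheme by (simp add: sym_assoc_scheme_def Jmat_def flip: sum_component)
  finally have "card {i \<in> {..D}. A i $ a $ b = 1} = 1"
    by (metis of_nat_1 of_nat_eq_iff)
  then obtain i0 where "{i \<in> {..D}. A i $ a $ b = 1} = {i0}"
    by (auto simp: card_1_singleton_iff)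
  then show ?thesis
    by (auto simp: set_eq_iff)
qed

definition rel_class :: "'x \<Rightarrow> 'x \<Rightarrow> nat" where
  "rel_class a b = (THE i. i \<le> D \<and> A i $ a $ b = 1)"

lemma rel_class_le: "rel_class a b \<le> D" and A_rel_class: "A (rel_class a b) $ a $ b = 1"
  using theI'[OF ex1_class[of a b]] by (simp_all add: rel_class_def)

lemma rel_class_eq_iff: "i \<le> D \<Longrightarrow> rel_class a b = i \<longleftrightarrow> A i $ a $ b = 1"
  using ex1_class rel_class_le A_rel_class by metis

lemma A_entry: "i \<le> D \<Longrightarrow> A i $ a $ b = (if rel_class a b = i then 1 else 0)"
  using rel_class_eq_iff A_zero_one by fastforce

lemma rel_class_sym: "rel_class a b = rel_class b a"
proof -
  have "A (rel_class a b) $ b $ a = 1"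
    using A_rel_class[of a b] transpose_eq_selfD[OF transpose_A[OF rel_class_le[of a b]], of a b]
    by simp
  then show ?thesis
    using rel_class_eq_iff[OF rel_class_le[of a b], of b a] by simp
qed

lemma rel_class_eq_0_iff: "rel_class a b = 0 \<longleftrightarrow> a = b"
  by (simp add: rel_class_eq_iff A_0 mat_def)

lemma dual_idem_0_mult: "dual_idem A 0 x *v v = v $ x *s axis x 1"
  by (simp add: vec_eq_iff dual_idem_eq_diag_row diag_row_matrix_vector_mult A_0 mat_def axis_def)

lemma dual_idem_eq_diag_row_indicator:
  assumes "1 \<le> k" and "k \<le> D"
    and "\<And>w. rel_class x w = k \<Longrightarrow> G $ x $ w = 1"
    and "\<And>w. rel_class x w \<in> {1..D} - {k} \<Longrightarrow> dual_idem A (rel_class x w) x *v v \<noteq> 0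
           \<Longrightarrow> G $ x $ w = 0"
  shows "dual_idem A k x *v v = diag_row G x *v v - (G $ x $ x * v $ x) *s axis x 1"
proof (rule dual_idem_eq_diag_row_minus)
  show "A k $ x $ x = 0"
    using assms(1,2) rel_class_eq_0_iff[of x x] by (simp add: A_entry)
next
  fix w assume "w \<noteq> x" and "v $ w \<noteq> 0"
  have "(dual_idem A (rel_class x w) x *v v) $ w \<noteq> 0"
    using \<open>v $ w \<noteq> 0\<close> A_rel_class[of x w]
    by (simp add: dual_idem_eq_diag_row diag_row_matrix_vector_mult)
  then have "dual_idem A (rel_class x w) x *v v \<noteq> 0"
    by (metis zero_index)
  moreover have "rel_class x w \<in> {1..D}"
    using \<open>w \<noteq> x\<close> rel_class_le[of x w] rel_class_eq_0_iff[of x w] by auto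
  ultimately show "G $ x $ w = A k $ x $ w"
    using assms(2-4) by (cases "rel_class x w = k") (simp_all add: A_entry)
qed

lemma bose_mesner_iff: "M \<in> bose_mesner D A \<longleftrightarrow> (\<exists>c. \<forall>a b. M $ a $ b = c (rel_class a b))"
proof -
  have entry: "(\<Sum>h\<le>D. c h * A h $ a $ b) = c (rel_class a b)" for c a b
    using rel_class_le[of a b] by (simp add: A_entry if_distrib cong: if_cong)
  show ?thesis
  proof
    assume "M \<in> bose_mesner D A"
    then show "\<exists>c. \<forall>a b. M $ a $ b = c (rel_class a b)"
      by (auto simp: bose_mesner_def entry)
  next
    assume "\<exists>c. \<forall>a b. M $ a $ b = c (rel_class a b)"
    then obtain c where "M = (\<Sum>h\<le>D. mscale (c h) (A h))"
      by (auto simp: vec_eq_iff entry)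
    then show "M \<in> bose_mesner D A"
      by (auto simp: bose_mesner_def)
  qed
qed

lemma transpose_bose_mesner: "M \<in> bose_mesner D A \<Longrightarrow> transpose M = M"
  by (auto simp: bose_mesner_iff vec_eq_iff transpose_def rel_class_sym)

lemma bose_mesner_map_cnj: "M \<in> bose_mesner D A \<Longrightarrow> map_matrix cnj M \<in> bose_mesner D A"
  by (auto simp: bose_mesner_iff)

lemma bose_mesner_mscale: "M \<in> bose_mesner D A \<Longrightarrow> mscale c M \<in> bose_mesner D A"
  by (auto simp: bose_mesner_iff)

lemma zero_in_bose_mesner: "0 \<in> bose_mesner D A"
  unfolding bose_mesner_iff by (intro exI[of _ "\<lambda>_. 0"]) simp

lemma bose_mesner_sum:
  "(\<And>i. i \<in> I \<Longrightarrow> f i \<in> bose_mesner D A) \<Longrightarrow> (\<Sum>i\<in>I. f i) \<in> bose_mesner D A"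
proof (induction I rule: infinite_finite_induct)
  case (insert i I)
  then obtain c d where c: "\<And>a b. f i $ a $ b = c (rel_class a b)"
    and d: "\<And>a b. sum f I $ a $ b = d (rel_class a b)"
    unfolding bose_mesner_iff by (metis insertCI)
  have "(\<Sum>j\<in>insert i I. f j) $ a $ b = c (rel_class a b) + d (rel_class a b)" for a b
    by (simp only: sum.insert[OF insert.hyps] vector_add_component c d)
  then show ?case
    unfolding bose_mesner_iff by (intro exI[of _ "\<lambda>r. c r + d r"]) simp
qed (simp_all add: zero_in_bose_mesner)

lemma bose_mesner_mult:
  assumes "M \<in> bose_mesner D A" and "N \<in> bose_mesner D A"
  shows "M ** N \<in> bose_mesner D A"
proof -
  obtain c d where "M = (\<Sum>g\<le>D. mscale (c g) (A g))" and "N = (\<Sum>h\<le>D. mscale (d h) (A h))"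
    using assms by (auto simp: bose_mesner_def)
  then have "M ** N = (\<Sum>h\<le>D. mscale (d h) (\<Sum>g\<le>D. mscale (c g) (A g ** A h)))"
    by (simp add: sum_matrix_mult matrix_mult_sum mscale_matrix_mult matrix_mult_mscale)
  then show ?thesis
    by (auto intro!: bose_mesner_sum bose_mesner_mscale A_mult_A_in_bose_mesner)
qed

lemma bose_mesner_commute:
  assumes "M \<in> bose_mesner D A" and "N \<in> bose_mesner D A"
  shows "M ** N = N ** M"
proof -
  have "M ** N = transpose (M ** N)"
    using assms by (simp add: bose_mesner_mult transpose_bose_mesner)
  also have "\<dots> = N ** M"
    using assms by (simp add: matrix_transpose_mul transpose_bose_mesner)
  finally show ?thesis .
qed

end

locale scheme_idempotents = symmetric_scheme D A
  for D :: nat and A :: "nat \<Rightarrow> complex^'x::finite^'x" +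
  fixes E :: "nat \<Rightarrow> complex^'x^'x"
  assumes idempotents: "primitive_idempotents D A E"
begin

lemma E_0: "E 0 = mscale (1 / of_nat CARD('x)) Jmat"
  using idempotents by (simp add: primitive_idempotents_def)

lemma E_in_bose_mesner: "h \<le> D \<Longrightarrow> E h \<in> bose_mesner D A"
  using idempotents by (simp add: primitive_idempotents_def)

lemma E_neq_0: "h \<le> D \<Longrightarrow> E h \<noteq> 0"
  using idempotents by (simp add: primitive_idempotents_def)

lemma E_mult_E: "i \<le> D \<Longrightarrow> j \<le> D \<Longrightarrow> E i ** E j = (if i = j then E i else 0)"
  using idempotents by (simp add: primitive_idempotents_def)

lemma sum_E: "(\<Sum>h\<le>D. E h) = mat 1"
  using idempotents by (simp add: primitive_idempotents_def)

lemma transpose_E: "h \<le> D \<Longrightarrow> transpose (E h) = E h"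
  by (simp add: E_in_bose_mesner transpose_bose_mesner)

lemma cnj_E_entry [simp]: "h \<le> D \<Longrightarrow> cnj (E h $ a $ b) = E h $ a $ b"
proof -
  assume h: "h \<le> D"
  have "map_matrix cnj (E h) = E h"
    using h by (intro map_matrix_cnj_eq_self)
      (simp_all add: transpose_E E_mult_E bose_mesner_commute bose_mesner_map_cnj E_in_bose_mesner)
  then show ?thesis
    by (metis nth_map_matrix)
qed

lemma span_E_mult_E:
  assumes "H \<subseteq> {..D}" and "l \<le> D"
  shows "(\<Sum>h\<in>H. mscale (c h) (E h)) ** E l = (if l \<in> H then mscale (c l) (E l) else 0)"
proof -
  have "h \<in> H \<Longrightarrow> h \<le> D" for h
    using assms(1) by auto
  then have "(\<Sum>h\<in>H. mscale (c h) (E h)) ** E l = (\<Sum>h\<in>H. if h = l then mscale (c l) (E l) else 0)"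
    unfolding sum_matrix_mult using assms(2)
    by (intro sum.cong refl) (simp add: mscale_matrix_mult E_mult_E)
  also have "\<dots> = (if l \<in> H then mscale (c l) (E l) else 0)"
    using assms(1) by (simp add: finite_subset)
  finally show ?thesis .
qed

lemma E_mult_span_E:
  assumes "H \<subseteq> {..D}" and "l \<le> D"
  shows "E l ** (\<Sum>h\<in>H. mscale (c h) (E h)) = (if l \<in> H then mscale (c l) (E l) else 0)"
proof -
  have "(\<Sum>h\<in>H. mscale (c h) (E h)) \<in> bose_mesner D A"
    using assms(1) by (auto intro!: bose_mesner_sum bose_mesner_mscale E_in_bose_mesner)
  then have "E l ** (\<Sum>h\<in>H. mscale (c h) (E h)) = (\<Sum>h\<in>H. mscale (c h) (E h)) ** E l"
    by (intro bose_mesner_commute E_in_bose_mesner assms(2))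
  then show ?thesis
    using span_E_mult_E[OF assms] by simp
qed

lemma sum_E_matrix_vector_mult: "(\<Sum>l\<le>D. E l *v v) = v"
  by (simp add: sum_matrix_vector_mult[symmetric] sum_E)

lemma diag_row_mult_E_0_mult:
  assumes "transpose G = G"
  shows "diag_row G x *v (E 0 *v v) = ((\<Sum>u\<in>UNIV. v $ u) / of_nat CARD('x)) *s (G *v axis x 1)"
proof -
  have "E 0 *v v = (\<chi> _. (\<Sum>u\<in>UNIV. v $ u) / of_nat CARD('x))"
    by (simp add: vec_eq_iff E_0 Jmat_def matrix_vector_mult_def sum_divide_distrib)
  moreover have "G *v axis x 1 = (\<chi> w. G $ x $ w)"
    using transpose_eq_selfD[OF assms]
    by (simp add: vec_eq_iff matrix_vector_mult_def axis_def if_distrib cong: if_cong)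
  ultimately show ?thesis
    by (simp add: vec_eq_iff diag_row_matrix_vector_mult mult.commute)
qed

end

section \<open>Cometric schemes\<close>

locale cometric_scheme = scheme_idempotents D A E
  for D :: nat and A E :: "nat \<Rightarrow> complex^'x::finite^'x" +
  assumes Q_polynomial: "cometric D E"
begin

lemma E_eq_poly_E1: "j \<le> D \<Longrightarrow> \<exists>p. degree p = j \<and> E j = map_matrix (poly p) (E 1)"
  using Q_polynomial by (auto simp: cometric_def vec_eq_iff)

lemma poly_E1_in_span:
  assumes "degree g \<le> m" and "m \<le> D"
  shows "\<exists>c. map_matrix (poly g) (E 1) = (\<Sum>h\<le>m. mscale (c h) (E h))"
  using assms
proof (induction m arbitrary: g)
  case 0
  obtain p where "degree p = 0" and E0: "E 0 = map_matrix (poly p) (E 1)"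
    using E_eq_poly_E1 by blast
  then have p: "p = [:coeff p 0:]" and g: "g = [:coeff g 0:]"
    using "0.prems"(1) by (simp_all add: degree_0_id)
  have "coeff p 0 \<noteq> 0"
    using E_neq_0[of 0] E0 by (subst (asm) p) (auto simp: vec_eq_iff)
  then have "map_matrix (poly g) (E 1) = mscale (coeff g 0 / coeff p 0) (E 0)"
    by (subst g, subst E0, subst p) (simp add: vec_eq_iff)
  then show ?case
    by auto
next
  case (Suc m)
  obtain p where deg_p: "degree p = Suc m" and Ep: "E (Suc m) = map_matrix (poly p) (E 1)"
    using E_eq_poly_E1 Suc.prems(2) by blast
  define r where "r = coeff g (Suc m) / lead_coeff p"
  have "degree (g - smult r p) \<le> m"
    unfolding r_def using Suc.prems(1) deg_p by (rule degree_cancel_leading_le)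
  then obtain c where c: "map_matrix (poly (g - smult r p)) (E 1) = (\<Sum>h\<le>m. mscale (c h) (E h))"
    using Suc.IH[of "g - smult r p"] Suc.prems(2) Suc_leD by blast
  have "map_matrix (poly g) (E 1) = map_matrix (poly (g - smult r p)) (E 1) + mscale r (E (Suc m))"
    by (simp add: vec_eq_iff Ep)
  also have "\<dots> = (\<Sum>h\<le>Suc m. mscale ((c(Suc m := r)) h) (E h))"
    by (simp only: c sum.atMost_Suc fun_upd_same) (simp cong: sum.cong_simp)
  finally show ?case
    by blast
qed

lemma poly_E1_mult_E_eq_0:
  assumes "degree g < l" and "l \<le> D"
  shows "map_matrix (poly g) (E 1) ** E l = 0"
proof -
  obtain c where "map_matrix (poly g) (E 1) = (\<Sum>h\<le>degree g. mscale (c h) (E h))"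
    using poly_E1_in_span assms by fastforce
  then show ?thesis
    using assms by (simp add: span_E_mult_E)
qed

lemma E_mult_poly_E1:
  assumes "j \<le> D" and "degree g \<le> D"
  shows "\<exists>\<beta>. E j ** map_matrix (poly g) (E 1) = mscale \<beta> (E j)"
proof -
  obtain c where "map_matrix (poly g) (E 1) = (\<Sum>h\<le>degree g. mscale (c h) (E h))"
    using poly_E1_in_span assms by blast
  then have "E j ** map_matrix (poly g) (E 1) = mscale (if j \<le> degree g then c j else 0) (E j)"
    using assms by (simp add: E_mult_span_E)
  then show ?thesis
    by blast
qed

lemma hadamard_E_mult_E_eq_0:
  assumes "h \<le> D" and "j \<le> D" and "l \<le> D" and "h + j < l"
  shows "(\<chi> a b. E h $ a $ b * E j $ a $ b) ** E l = 0"
proof -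
  obtain p q where p: "degree p = h" "E h = map_matrix (poly p) (E 1)"
    and q: "degree q = j" "E j = map_matrix (poly q) (E 1)"
    using E_eq_poly_E1 assms(1,2) by metis
  have "(\<chi> a b. E h $ a $ b * E j $ a $ b) = map_matrix (poly (p * q)) (E 1)"
    by (simp add: vec_eq_iff p(2) q(2))
  moreover have "degree (p * q) < l"
    using degree_mult_le[of p q] p(1) q(1) assms(4) by linarith
  ultimately show ?thesis
    using poly_E1_mult_E_eq_0 assms(3) by metis
qed

lemma E_diag_row_E_eq_0:
  assumes "h \<le> D" and "j \<le> D" and "l \<le> D" and "h + j < l"
  shows "E j ** diag_row (E h) x ** E l = 0"
proof -
  \<comment> \<open>The entries \<open>T x y z\<close> are real, and their squares add up to the trace of \<open>(E\<^sub>h \<circ> E\<^sub>j) E\<^sub>l\<close>.\<close>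
  define T where "T x y z = (E j ** diag_row (E h) x ** E l) $ y $ z" for x y z
  have T_sq: "(T x y z)\<^sup>2 = complex_of_real ((Re (T x y z))\<^sup>2)" for x y z
  proof -
    have "cnj (T x y z) = T x y z"
      using assms by (simp add: T_def matrix_mult_diag_row_mult)
    then show ?thesis
      by (metis Reals_cnj_iff of_real_Re of_real_power)
  qed
  have "(\<Sum>y\<in>UNIV. \<Sum>z\<in>UNIV. \<Sum>x\<in>UNIV. (T x y z)\<^sup>2)
      = (\<Sum>w\<in>UNIV. \<Sum>w'\<in>UNIV. E h $ w $ w' * E j $ w $ w' * E l $ w $ w')"
    unfolding T_def using assms by (intro sum_sq_sandwich_diag_row) (simp_all add: transpose_E E_mult_E)
  also have "\<dots> = (\<Sum>w\<in>UNIV. ((\<chi> a b. E h $ a $ b * E j $ a $ b) ** E l) $ w $ w)"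
    using transpose_eq_selfD[OF transpose_E[OF assms(3)]] by (simp add: matrix_matrix_mult_def)
  also have "\<dots> = 0"
    using hadamard_E_mult_E_eq_0[OF assms] by simp
  finally have "(\<Sum>y\<in>UNIV. \<Sum>z\<in>UNIV. \<Sum>x\<in>UNIV. (Re (T x y z))\<^sup>2) = 0"
    by (simp only: T_sq of_real_sum[symmetric] of_real_eq_0_iff)
  then have "Re (T x y z) = 0" for x y z
    by (simp add: sum_nonneg_eq_0_iff sum_nonneg)
  then show ?thesis
    using T_sq by (simp add: vec_eq_iff T_def)
qed

lemma E_diag_row_poly_E_eq_0:
  assumes "j \<le> D" and "l \<le> D" and "degree g + j < l"
  shows "E j ** diag_row (map_matrix (poly g) (E 1)) x ** E l = 0"
proof -
  obtain c where "map_matrix (poly g) (E 1) = (\<Sum>h\<le>degree g. mscale (c h) (E h))"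
    using poly_E1_in_span assms by fastforce
  then have "E j ** diag_row (map_matrix (poly g) (E 1)) x ** E l
      = (\<Sum>h\<le>degree g. mscale (c h) (E j ** diag_row (E h) x ** E l))"
    by (simp add: diag_row_sum diag_row_mscale matrix_mult_sum sum_matrix_mult
        matrix_mult_mscale mscale_matrix_mult)
  also have "\<dots> = 0"
    using assms by (intro sum.neutral ballI) (simp add: E_diag_row_E_eq_0)
  finally show ?thesis .
qed

lemma degree_poly_vanishing_on_E1:
  assumes "q \<noteq> 0" and "\<And>a b. poly q (E 1 $ a $ b) = 0"
  shows "D < degree q"
proof (rule ccontr)
  assume "\<not> D < degree q"
  have "0 < degree q"
  proof (rule ccontr)
    assume "\<not> 0 < degree q"
    then obtain c where "q = [:c:]"
      by (metis degree_eq_zeroE gr0I)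
    then show False
      using assms by simp
  qed
  \<comment> \<open>Reduced modulo \<open>q\<close>, \<open>E\<^sub>D\<close> becomes a polynomial of degree \<open>< D\<close> in \<open>E\<^sub>1\<close>, which \<open>E\<^sub>D\<close> annihilates.\<close>
  obtain p where "degree p = D" and p: "E D = map_matrix (poly p) (E 1)"
    using E_eq_poly_E1 by blast
  have E_D: "E D = map_matrix (poly (p mod q)) (E 1)"
    by (simp add: vec_eq_iff p poly_mod assms(2) del: One_nat_def)
  have "degree (p mod q) < D"
    using degree_mod_less[OF assms(1), of p] \<open>0 < degree q\<close> \<open>\<not> D < degree q\<close> by auto
  then have "map_matrix (poly (p mod q)) (E 1) ** E D = 0"
    by (intro poly_E1_mult_E_eq_0) simp_all
  then have "E D ** E D = 0"
    by (simp only: E_D[symmetric])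
  then show False
    using E_mult_E[of D D] E_neq_0[of D] by simp
qed

lemma E1_class_values:
  assumes "1 \<le> D"
  obtains \<theta> where "\<And>a b. E 1 $ a $ b = \<theta> (rel_class a b)" and "inj_on \<theta> {..D}"
proof -
  obtain \<theta> where \<theta>: "\<And>a b. E 1 $ a $ b = \<theta> (rel_class a b)"
    using E_in_bose_mesner[OF assms] by (auto simp: bose_mesner_iff)
  define q where "q = (\<Prod>t\<in>\<theta> ` {..D}. [:- t, 1:])"
  have "q \<noteq> 0"
    by (simp add: q_def)
  moreover have "poly q (E 1 $ a $ b) = 0" for a b
    unfolding q_def poly_prod \<theta> using rel_class_le[of a b] by auto
  ultimately have "D < degree q"
    by (rule degree_poly_vanishing_on_E1)
  also have "degree q \<le> card (\<theta> ` {..D})"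
    unfolding q_def using degree_prod_sum_le[of "\<theta> ` {..D}" "\<lambda>t. [:- t, 1:]"] by simp
  finally have "card {..D} \<le> card (\<theta> ` {..D})"
    by simp
  then have "inj_on \<theta> {..D}"
    using card_image_le[of "{..D}" \<theta>] by (simp add: eq_card_imp_inj_on)
  with \<theta> show thesis
    by (rule that)
qed

lemma E_diag_row_poly_collinear:
  assumes "1 \<le> D" and "j \<le> D" and "degree g \<le> D"
    and "\<And>l. 1 \<le> l \<Longrightarrow> l \<le> D \<Longrightarrow> E l *v v \<noteq> 0 \<Longrightarrow> degree g + j < l"
  shows "\<exists>\<beta>. E j *v (diag_row (map_matrix (poly g) (E 1)) x *v v) = \<beta> *s (E j *v axis x 1)"
proof -
  define G where "G = map_matrix (poly g) (E 1)"
  define \<sigma> where "\<sigma> = (\<Sum>u\<in>UNIV. v $ u) / of_nat CARD('x)"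
  have high: "(E j ** diag_row G x ** E l) *v v = 0" if "l \<in> {1..D}" for l
  proof (cases "E l *v v = 0")
    case True
    then show ?thesis
      by (simp flip: matrix_vector_mul_assoc)
  next
    case False
    then have "degree g + j < l"
      using assms(4) that by simp
    then have "E j ** diag_row G x ** E l = 0"
      using assms(2) that by (simp add: G_def E_diag_row_poly_E_eq_0 del: One_nat_def)
    then show ?thesis
      by simp
  qed
  have "E j *v (diag_row G x *v v) = (\<Sum>l\<le>D. (E j ** diag_row G x ** E l) *v v)"
    by (subst (1) sum_E_matrix_vector_mult[symmetric, of v])
      (simp add: matrix_vector_mult_sum matrix_vector_mul_assoc matrix_mul_assoc)
  also have "\<dots> = (E j ** diag_row G x ** E 0) *v v"
    using high by (simp add: atMost_atLeast0 sum.atLeast_Suc_atMost)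
  also have "\<dots> = E j *v (\<sigma> *s (G *v axis x 1))"
  proof -
    have "transpose G = G"
      using transpose_E[OF assms(1)] by (simp add: G_def vec_eq_iff transpose_def)
    then show ?thesis
      by (simp add: \<sigma>_def diag_row_mult_E_0_mult flip: matrix_vector_mul_assoc)
  qed
  also have "\<dots> = \<sigma> *s ((E j ** G) *v axis x 1)"
    by (simp add: matrix_vector_mult_scalar matrix_vector_mul_assoc)
  finally show ?thesis
    using E_mult_poly_E1[OF assms(2,3)]
    by (auto simp: G_def mscale_matrix_vector_mult vector_smult_assoc)
qed

lemma ex_poly_E1_indicator:
  assumes "S \<subseteq> {1..D}" and "k \<in> S"
  obtains g where "degree g < card S"
    and "\<And>a b. rel_class a b = k \<Longrightarrow> poly g (E 1 $ a $ b) = 1"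
    and "\<And>a b. rel_class a b \<in> S - {k} \<Longrightarrow> poly g (E 1 $ a $ b) = 0"
proof -
  have "1 \<le> D" and "finite S"
    using assms by (auto simp: finite_subset)
  then obtain \<theta> where \<theta>: "\<And>a b. E 1 $ a $ b = \<theta> (rel_class a b)" and "inj_on \<theta> {..D}"
    using E1_class_values by blast
  then have "\<theta> k \<notin> \<theta> ` (S - {k})"
    using assms by (auto simp: inj_on_def subset_iff)
  then obtain g where deg: "degree g \<le> card (\<theta> ` (S - {k}))" and g1: "poly g (\<theta> k) = 1"
    and g0: "\<And>t. t \<in> \<theta> ` (S - {k}) \<Longrightarrow> poly g t = 0"
    using ex_poly_indicator[of "\<theta> ` (S - {k})" "\<theta> k"] \<open>finite S\<close> by blast
  show thesis
  proof (rule that)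
    show "degree g < card S"
      using deg card_image_le[of "S - {k}" \<theta>] card_Diff1_less[OF \<open>finite S\<close> assms(2)] \<open>finite S\<close>
      by simp
    show "poly g (E 1 $ a $ b) = 1" if "rel_class a b = k" for a b
      unfolding \<theta> using that g1 by simp
    show "poly g (E 1 $ a $ b) = 0" if "rel_class a b \<in> S - {k}" for a b
      unfolding \<theta> using that g0 by simp
  qed
qed

lemma E_dual_idem_collinear:
  assumes "k \<le> D" and "j \<le> D" and "j + s_x D A x v \<le> dual_min_dist D E v"
  shows "\<exists>\<beta>. E j *v (dual_idem A k x *v v) = \<beta> *s (E j *v axis x 1)"
proof (cases "k = 0 \<or> dual_idem A k x *v v = 0")
  case True
  then show ?thesis
    by (metis dual_idem_0_mult matrix_vector_mult_0_right matrix_vector_mult_scalar vector_smult_lzero)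
next
  case False
  define S where "S = {i \<in> {1..D}. dual_idem A i x *v v \<noteq> 0}"
  have "S \<subseteq> {1..D}" and "k \<in> S"
    using False assms(1) by (auto simp: S_def)
  then obtain g where "degree g < card S"
    and g1: "\<And>a b. rel_class a b = k \<Longrightarrow> poly g (E 1 $ a $ b) = 1"
    and g0: "\<And>a b. rel_class a b \<in> S - {k} \<Longrightarrow> poly g (E 1 $ a $ b) = 0"
    using ex_poly_E1_indicator by blast
  then have deg: "degree g < s_x D A x v"
    by (simp add: s_x_def S_def)
  define G where "G = map_matrix (poly g) (E 1)"
  have psi: "dual_idem A k x *v v = diag_row G x *v v - (G $ x $ x * v $ x) *s axis x 1"
    using False assms(1)
    by (intro dual_idem_eq_diag_row_indicator) (auto simp: G_def S_def g1 g0 simp del: One_nat_def)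
  have "s_x D A x v \<le> D"
    using card_mono[OF _ \<open>S \<subseteq> {1..D}\<close>] by (simp add: s_x_def S_def)
  have "\<exists>\<beta>. E j *v (diag_row G x *v v) = \<beta> *s (E j *v axis x 1)"
    unfolding G_def
  proof (rule E_diag_row_poly_collinear)
    show "1 \<le> D" "j \<le> D" "degree g \<le> D"
      using \<open>k \<in> S\<close> \<open>S \<subseteq> {1..D}\<close> assms(2) deg \<open>s_x D A x v \<le> D\<close> by auto
  next
    fix l assume "1 \<le> l" and "l \<le> D" and "E l *v v \<noteq> 0"
    then have "dual_min_dist D E v \<le> l"
      by (auto simp: dual_min_dist_def intro!: Min_le)
    then show "degree g + j < l"
      using deg assms(3) by linarith
  qed
  then obtain \<beta> where "E j *v (diag_row G x *v v) = \<beta> *s (E j *v axis x 1)"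
    by blast
  then have "E j *v (dual_idem A k x *v v) = (\<beta> - G $ x $ x * v $ x) *s (E j *v axis x 1)"
    by (simp add: psi matrix_vector_mult_diff_distrib matrix_vector_mult_scalar vec_eq_iff algebra_simps)
  then show ?thesis
    by blast
qed

end

theorem theorem4p3:
  fixes D :: nat and A E :: "nat \<Rightarrow> complex^'x::finite^'x"
    and x :: 'x and v :: "complex^'x" and k :: nat
  assumes "sym_assoc_scheme D A"
    and "primitive_idempotents D A E"
    and "cometric D E"
    and "is_code A E v"
    and "k \<le> D"
  shows "relative_design D E x (dual_idem A k x *v v)
           (int (dual_min_dist D E v) - int (s_x D A x v))"
proof -
  interpret cometric_scheme D A E
    by unfold_locales (fact assms)+
  show ?thesis
    unfolding relative_design_def
  proof (intro allI impI)
    fix j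
    assume "1 \<le> j \<and> j \<le> D \<and> int j \<le> int (dual_min_dist D E v) - int (s_x D A x v)"
    then obtain \<beta> where "E j *v (dual_idem A k x *v v) = \<beta> *s (E j *v axis x 1)"
      using E_dual_idem_collinear[OF assms(5)] by (metis add.commute le_diff_eq of_nat_add of_nat_le_iff)
    then show "lin_dep2 (E j *v (dual_idem A k x *v v)) (E j *v axis x 1)"
      by (rule lin_dep2_scaled)
  qed
qed

end
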